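(* If (A1), (A3) and (A4) hold, then there exists $\varepsilon>0$ such that $|1-FR(\lambda,A)B|>\varepsilon$ for all $\lambda\in\rho(A)$ with $\mathrm{Re}\,\lambda\ge0$.
   Context: $X$ is a complex Hilbert space; $A$ is a Riesz-spectral operator (simple distinct eigenvalues $(\lambda_n)$ with finitely many accumulation points, Riesz basis of eigenvectors $(\phi_n)$, biorthogonal eigenvectors $(\psi_n)$ of $A^*$, $Ax=\sum_n\lambda_n\langle x,\psi_n\rangle\phi_n$). $\mathcal D^{\beta}=\{x:\sum_n|\lambda_n|^{2\beta}|\langle x,\psi_n\rangle|^2<\infty\}$, $\mathcal D^{\gamma}_*=\{x:\sum_n|\lambda_n|^{2\gamma}|\langle x,\phi_n\rangle|^2<\infty\}$, $\Omega_{\alpha,\Upsilon}=\{\lambda\in\mathbb C\setminus\mathbb R:\mathrm{Re}\,\lambda\le-\Upsilon/|\mathrm{Im}\,\lambda|^\alpha\}$. $b,f\in X$, $Bu=bu$, $Fx=\langle x,f\rangle$. Polynomially stable with parameter $\alpha$: uniformly bounded, $i\mathbb R$ in the resolvent set of the generator $G$, $\|T(t)G^{-1}\|=O(t^{-1/\alpha})$. (A1): there exist $\omega,\alpha,\Upsilon>0$ such that only finitely many $\lambda_n$ lie in $\{\mathrm{Re}\,\lambda>-\omega\}\cap(\mathbb C\setminus\Omega_{\alpha,\Upsilon})$; (A3): $A+BF$ generates a polynomially stable $C_0$-semigroup with parameter $\alpha$; (A4): there are $\beta,\gamma\ge0$ with $b\in\mathcal D^\beta$, $f\in\mathcal D^\gamma_*$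 and either ($\beta,\gamma\in\mathbb N\cup\{0\}$, $\beta+\gamma\ge\alpha$) or $\beta+\gamma>\alpha$. *)

theory Defs
  imports "HOL-Analysis.Analysis"
begin

(* A complex Hilbert space: a real Banach space 'a together with a complex
   scalar multiplication sc extending the real one and an inner product ip
   (linear in the first, conjugate-linear in the second argument) inducing
   the norm of 'a. *)
definition complex_hilbert :: "(complex \<Rightarrow> 'a::banach \<Rightarrow> 'a) \<Rightarrow> ('a \<Rightarrow> 'a \<Rightarrow> complex) \<Rightarrow> bool" where
  "complex_hilbert sc ip \<longleftrightarrow>
     (\<forall>r x. sc (complex_of_real r) x = r *\<^sub>R x) \<and>
     (\<forall>a b x. sc (a * b) x = sc a (sc b x)) \<and>
     (\<forall>a x y. sc a (x + y) = sc a x + sc a y) \<and>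
     (\<forall>a b x. sc (a + b) x = sc a x + sc b x) \<and>
     (\<forall>x y z. ip (x + y) z = ip x z + ip y z) \<and>
     (\<forall>a x y. ip (sc a x) y = a * ip x y) \<and>
     (\<forall>x y. ip y x = cnj (ip x y)) \<and>
     (\<forall>x. ip x x = complex_of_real ((norm x)\<^sup>2))"

definition riesz_basis :: "(complex \<Rightarrow> 'a::banach \<Rightarrow> 'a) \<Rightarrow> (nat \<Rightarrow> 'a) \<Rightarrow> bool" where
  "riesz_basis sc phi \<longleftrightarrow>
     closure {(\<Sum>n<N. sc (c n) (phi n)) | N c. True} = UNIV \<and>
     (\<exists>m M. 0 < m \<and> 0 < M \<and>
        (\<forall>N c. m * (\<Sum>n<N. (cmod (c n))\<^sup>2) \<le> (norm (\<Sum>n<N. sc (c n) (phi n)))\<^sup>2 \<and>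
               (norm (\<Sum>n<N. sc (c n) (phi n)))\<^sup>2 \<le> M * (\<Sum>n<N. (cmod (c n))\<^sup>2)))"

definition riesz_spectral_data ::
  "(complex \<Rightarrow> 'a::banach \<Rightarrow> 'a) \<Rightarrow> ('a \<Rightarrow> 'a \<Rightarrow> complex) \<Rightarrow> (nat \<Rightarrow> complex) \<Rightarrow> (nat \<Rightarrow> 'a) \<Rightarrow> (nat \<Rightarrow> 'a) \<Rightarrow> bool" where
  "riesz_spectral_data sc ip lam phi psi \<longleftrightarrow>
     inj lam \<and> finite {z. z islimpt range lam} \<and> riesz_basis sc phi \<and>
     (\<forall>n m. ip (phi n) (psi m) = (if n = m then 1 else 0))"

definition rs_dom :: "('a \<Rightarrow> 'a \<Rightarrow> complex) \<Rightarrow> (nat \<Rightarrow> complex) \<Rightarrow> (nat \<Rightarrow> 'a) \<Rightarrow> 'a set" where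
  "rs_dom ip lam psi = {x. summable (\<lambda>n. (cmod (lam n))\<^sup>2 * (cmod (ip x (psi n)))\<^sup>2)}"

definition rs_op :: "(complex \<Rightarrow> 'a::banach \<Rightarrow> 'a) \<Rightarrow> ('a \<Rightarrow> 'a \<Rightarrow> complex) \<Rightarrow> (nat \<Rightarrow> complex) \<Rightarrow> (nat \<Rightarrow> 'a) \<Rightarrow> (nat \<Rightarrow> 'a) \<Rightarrow> 'a \<Rightarrow> 'a" where
  "rs_op sc ip lam phi psi x = (\<Sum>n. sc (lam n * ip x (psi n)) (phi n))"

definition Dpow :: "('a \<Rightarrow> 'a \<Rightarrow> complex) \<Rightarrow> (nat \<Rightarrow> complex) \<Rightarrow> (nat \<Rightarrow> 'a) \<Rightarrow> real \<Rightarrow> 'a set" where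
  "Dpow ip lam psi \<beta> = {x. summable (\<lambda>n. (cmod (lam n)) powr (2 * \<beta>) * (cmod (ip x (psi n)))\<^sup>2)}"

definition Omega :: "real \<Rightarrow> real \<Rightarrow> complex set" where
  "Omega \<alpha> \<Upsilon> = {z. Im z \<noteq> 0 \<and> Re z \<le> - \<Upsilon> / (\<bar>Im z\<bar> powr \<alpha>)}"

definition resolvent_set :: "(complex \<Rightarrow> 'a::banach \<Rightarrow> 'a) \<Rightarrow> 'a set \<Rightarrow> ('a \<Rightarrow> 'a) \<Rightarrow> complex set" where
  "resolvent_set sc D A = {z. (\<forall>y. \<exists>!x. x \<in> D \<and> sc z x - A x = y) \<and>
                            (\<exists>C. \<forall>x\<in>D. norm x \<le> C * norm (sc z x - A x))}"

definition resolvent :: "(complex \<Rightarrow> 'a::banach \<Rightarrow> 'a) \<Rightarrow> 'a set \<Rightarrow> ('a \<Rightarrow> 'a) \<Rightarrow> complex \<Rightarrow> 'a \<Rightarrow> 'a" where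
  "resolvent sc D A z y = (THE x. x \<in> D \<and> sc z x - A x = y)"

definition C0_semigroup :: "(complex \<Rightarrow> 'a::banach \<Rightarrow> 'a) \<Rightarrow> (real \<Rightarrow> 'a \<Rightarrow> 'a) \<Rightarrow> bool" where
  "C0_semigroup sc T \<longleftrightarrow>
     (\<forall>t\<ge>0. bounded_linear (T t) \<and> (\<forall>c x. T t (sc c x) = sc c (T t x))) \<and>
     T 0 = id \<and>
     (\<forall>t s. 0 \<le> t \<longrightarrow> 0 \<le> s \<longrightarrow> T (t + s) = T t \<circ> T s) \<and>
     (\<forall>x. ((\<lambda>t. T t x) \<longlongrightarrow> x) (at_right 0))"

definition gen_dom :: "(real \<Rightarrow> 'a::real_normed_vector \<Rightarrow> 'a) \<Rightarrow> 'a set" where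
  "gen_dom T = {x. \<exists>y. ((\<lambda>h. (1 / h) *\<^sub>R (T h x - x)) \<longlongrightarrow> y) (at_right 0)}"

definition gen :: "(real \<Rightarrow> 'a::real_normed_vector \<Rightarrow> 'a) \<Rightarrow> 'a \<Rightarrow> 'a" where
  "gen T x = Lim (at_right 0) (\<lambda>h. (1 / h) *\<^sub>R (T h x - x))"

definition generates :: "(complex \<Rightarrow> 'a::banach \<Rightarrow> 'a) \<Rightarrow> 'a set \<Rightarrow> ('a \<Rightarrow> 'a) \<Rightarrow> (real \<Rightarrow> 'a \<Rightarrow> 'a) \<Rightarrow> bool" where
  "generates sc D A T \<longleftrightarrow> C0_semigroup sc T \<and> gen_dom T = D \<and> (\<forall>x\<in>D. gen T x = A x)"

definition poly_stable :: "(complex \<Rightarrow> 'a::banach \<Rightarrow> 'a) \<Rightarrow> real \<Rightarrow> (real \<Rightarrow> 'a \<Rightarrow> 'a) \<Rightarrow> bool" where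
  "poly_stable sc \<alpha> T \<longleftrightarrow>
     (\<exists>M. \<forall>t\<ge>0. \<forall>x. norm (T t x) \<le> M * norm x) \<and>
     (\<forall>s::real. \<i> * complex_of_real s \<in> resolvent_set sc (gen_dom T) (gen T)) \<and>
     (\<exists>C t0. \<forall>t\<ge>t0. \<forall>y.
        norm (T t (THE x. x \<in> gen_dom T \<and> gen T x = y)) \<le> C * t powr (- 1 / \<alpha>) * norm y)"

end

theory Submission
  imports Defs
begin

(*
  Expanding the resolvent along the Riesz basis gives
    F R(z, A) B = \<Sum>n. <b, psi n> <phi n, f> / (z - lam n).
  By (A1), 1 / |z - lam n| \<le> 1/\<omega> + |lam n|^\<alpha> / \<Upsilon> on the closed right half-plane for all
  but finitely many n, and by (A4) the weights |<b, psi n> <phi n, f>| (1 + |lam n|^\<alpha>) are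
  summable. Hence the series is uniformly small for large |z|, and near any point l it is a
  continuous function plus at most one pole term.

  Suppose 1 - F R(z_k, A) B \<rightarrow> 0 along a sequence with Re z_k \<ge> 0. The sequence is bounded,
  so a subsequence converges to some l. If l = lam j with <b, psi j> \<noteq> 0, then
  (z - l) F R(z, A) B tends to <b, psi j> <phi j, f>, which is nonzero because otherwise phi j
  would be an eigenvector of A + BF; this contradicts the convergence to 1. Otherwise the regular
  part equals 1 at l, and solving (l - A) x = b coefficientwise gives an eigenvector x of A + BF
  for l. Both are excluded by (A3): a polynomially stable semigroup has no eigenvalue with
  Re z \<ge> 0, since iR lies in the resolvent set of its generator and an eigenvector for
  Re z > 0 would have the unbounded orbit exp (z t) x.
*)

lemma summable_square_norm_le:
  fixes c d :: "nat \<Rightarrow> 'b::real_normed_vector"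
  assumes "summable (\<lambda>n. (norm (c n))\<^sup>2)" and "\<And>n. norm (d n) \<le> K * norm (c n)"
  shows "summable (\<lambda>n. (norm (d n))\<^sup>2)"
proof (rule summable_comparison_test[OF _ summable_mult[OF assms(1), of "K\<^sup>2"]])
  have "(norm (d n))\<^sup>2 \<le> (K * norm (c n))\<^sup>2" for n
    using assms(2)[of n] by (intro power_mono) auto
  then show "\<exists>N. \<forall>n\<ge>N. norm ((norm (d n))\<^sup>2) \<le> K\<^sup>2 * (norm (c n))\<^sup>2"
    by (simp add: power_mult_distrib)
qed

lemma norm_div_dist_le:
  fixes z l :: complex
  assumes "0 < \<delta>" "\<delta> \<le> cmod (z - l)"
  shows "cmod l / cmod (z - l) \<le> cmod z / \<delta> + 1"
proof -
  have pos: "cmod (z - l) > 0" using assms by linarith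
  have "cmod l \<le> cmod z + cmod (z - l)" by (metis norm_minus_commute norm_triangle_sub add.commute)
  then have "cmod l / cmod (z - l) \<le> cmod z / cmod (z - l) + 1"
    using pos by (simp add: field_simps)
  also have "cmod z / cmod (z - l) \<le> cmod z / \<delta>"
    using assms pos by (intro divide_left_mono) auto
  finally show ?thesis by simp
qed

lemma tendsto_exp_difference_quotient:
  fixes z :: complex
  shows "((\<lambda>h::real. (exp (z * of_real h) - 1) / of_real h) \<longlongrightarrow> z) (at_right 0)"
proof -
  have "((\<lambda>w. exp (z * w)) has_field_derivative z) (at 0)"
    by (auto intro!: derivative_eq_intros)
  then have L: "((\<lambda>w. (exp (z * w) - 1) / w) \<longlongrightarrow> z) (at 0)"
    unfolding DERIV_def by simp
  have "filterlim (\<lambda>h::real. complex_of_real h) (at 0) (at_right 0)"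
    unfolding filterlim_at
  proof
    show "\<forall>\<^sub>F h in at_right 0. complex_of_real h \<in> UNIV \<and> complex_of_real h \<noteq> 0"
      using eventually_at_right_less[of "0::real"] by eventually_elim simp
    show "((\<lambda>h::real. complex_of_real h) \<longlongrightarrow> 0) (at_right 0)"
      using tendsto_of_real[OF tendsto_ident_at[of 0 "{0<..}"]] by simp
  qed
  from filterlim_compose[OF L this] show ?thesis by simp
qed

lemma filterlim_divide_real_at_right_0:
  "t > 0 \<Longrightarrow> filterlim (\<lambda>n. t / real n) (at_right 0) sequentially"
  unfolding filterlim_at
proof
  assume "t > 0"
  then show "\<forall>\<^sub>F n in sequentially. t / real n \<in> {0<..} \<and> t / real n \<noteq> 0"
    unfolding eventually_sequentially by (intro exI[of _ 1]) auto
qed (rule lim_const_over_n)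

section \<open>Complex Hilbert spaces\<close>

locale complex_hilbert_space =
  fixes sc :: "complex \<Rightarrow> 'a::banach \<Rightarrow> 'a" and ip :: "'a \<Rightarrow> 'a \<Rightarrow> complex"
  assumes complex_hilbert: "complex_hilbert sc ip"
begin

lemma sc_of_real: "sc (complex_of_real r) x = r *\<^sub>R x"
  and sc_mult: "sc (a * b) x = sc a (sc b x)"
  and sc_add_right: "sc a (x + y) = sc a x + sc a y"
  and sc_add_left: "sc (a + b) x = sc a x + sc b x"
  and ip_add_left: "ip (x + y) z = ip x z + ip y z"
  and ip_sc_left: "ip (sc a x) y = a * ip x y"
  and ip_commute: "ip y x = cnj (ip x y)"
  and ip_self: "ip x x = complex_of_real ((norm x)\<^sup>2)"
  using complex_hilbert unfolding complex_hilbert_def by blast+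

lemma sc_0[simp]: "sc 0 x = 0" using sc_of_real[of 0 x] by simp
lemma sc_1[simp]: "sc 1 x = x" using sc_of_real[of 1 x] by simp
lemma sc_zero[simp]: "sc a 0 = 0" using sc_add_right[of a 0 0] by simp
lemma sc_minus_right: "sc a (- x) = - sc a x"
  using minus_unique[of "sc a x" "sc a (-x)"] sc_add_right[of a x "-x"] by simp
lemma sc_diff_right: "sc a (x - y) = sc a x - sc a y"
  using sc_add_right[of a x "-y"] sc_minus_right by simp
lemma sc_minus_left: "sc (- a) x = - sc a x"
  using minus_unique[of "sc a x" "sc (-a) x"] sc_add_left[of a "-a" x] by simp
lemma sc_diff_left: "sc (a - b) x = sc a x - sc b x"
  using sc_add_left[of a "-b" x] sc_minus_left by simp
lemma sc_scaleR: "sc a (r *\<^sub>R x) = r *\<^sub>R sc a x"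
  by (metis mult.commute sc_mult sc_of_real)

lemma ip_zero_left[simp]: "ip 0 y = 0" using ip_add_left[of 0 0 y] by simp
lemma ip_zero_right[simp]: "ip y 0 = 0" using ip_commute[of 0 y] by simp
lemma ip_minus_left: "ip (- x) y = - ip x y"
  using minus_unique[of "ip x y" "ip (-x) y"] ip_add_left[of x "-x" y] by simp
lemma ip_diff_left: "ip (x - y) z = ip x z - ip y z"
  using ip_add_left[of x "-y" z] ip_minus_left by simp
lemma ip_add_right: "ip x (y + z) = ip x y + ip x z"
  using ip_commute[of x "y+z"] ip_commute[of x y] ip_commute[of x z] ip_add_left[of y z x] by simp
lemma ip_sc_right: "ip x (sc a y) = cnj a * ip x y"
  using ip_commute[of x "sc a y"] ip_commute[of x y] ip_sc_left[of a y x] by simp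
lemma ip_minus_right: "ip x (- y) = - ip x y"
  using minus_unique[of "ip x y" "ip x (-y)"] ip_add_right[of x y "-y"] by simp
lemma ip_diff_right: "ip x (y - z) = ip x y - ip x z"
  using ip_add_right[of x y "-z"] ip_minus_right by simp
lemma ip_scaleR_left: "ip (r *\<^sub>R x) y = of_real r * ip x y"
  using ip_sc_left[of "of_real r" x y] sc_of_real by simp
lemma ip_scaleR_right: "ip x (r *\<^sub>R y) = of_real r * ip x y"
  using ip_sc_right[of x "of_real r" y] sc_of_real by simp
lemma ip_sum_left: "ip (sum f S) y = (\<Sum>i\<in>S. ip (f i) y)"
  by (induction S rule: infinite_finite_induct) (auto simp: ip_add_left)
lemma ip_sum_right: "ip y (sum f S) = (\<Sum>i\<in>S. ip y (f i))"
  by (induction S rule: infinite_finite_induct) (auto simp: ip_add_right)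

lemma norm_sc: "norm (sc a x) = cmod a * norm x"
proof -
  have "complex_of_real ((norm (sc a x))\<^sup>2) = a * cnj a * complex_of_real ((norm x)\<^sup>2)"
    using ip_self[of "sc a x"] ip_sc_left ip_sc_right ip_self[of x] by (simp add: ac_simps)
  also have "a * cnj a = complex_of_real ((cmod a)\<^sup>2)" by (rule complex_norm_square[symmetric])
  finally have "(norm (sc a x))\<^sup>2 = ((cmod a) * norm x)\<^sup>2"
    by (metis of_real_eq_iff of_real_mult power_mult_distrib)
  then show ?thesis by (simp add: power2_eq_iff_nonneg)
qed

lemma norm_diff_scaleR_square: "(norm (x - t *\<^sub>R y))\<^sup>2 = (norm x)\<^sup>2 - 2 * t * Re (ip x y) + t\<^sup>2 * (norm y)\<^sup>2"
proof -
  have "complex_of_real ((norm (x - t *\<^sub>R y))\<^sup>2) = ip (x - t *\<^sub>R y) (x - t *\<^sub>R y)" by (simp add: ip_self)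
  also have "\<dots> = ip x x - of_real t * ip x y - of_real t * ip y x + of_real t * of_real t * ip y y"
    by (simp add: ip_diff_left ip_diff_right ip_scaleR_left ip_scaleR_right algebra_simps)
  finally have "(norm (x - t *\<^sub>R y))\<^sup>2 = Re (ip x x - of_real t * ip x y - of_real t * ip y x + of_real t * of_real t * ip y y)"
    by (metis Re_complex_of_real)
  also have "\<dots> = (norm x)\<^sup>2 - 2 * t * Re (ip x y) + t\<^sup>2 * (norm y)\<^sup>2"
    using ip_self[of x] ip_self[of y] ip_commute[of y x] by (simp add: power2_eq_square)
  finally show ?thesis .
qed

lemma abs_Re_ip_le: "\<bar>Re (ip x y)\<bar> \<le> norm x * norm y"
proof (cases "y = 0")
  case True then show ?thesis by simp
next
  case False
  then have ny: "norm y > 0" by simp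
  define t where "t = Re (ip x y) / (norm y)\<^sup>2"
  have "0 \<le> (norm (x - t *\<^sub>R y))\<^sup>2" by simp
  also have "\<dots> = (norm x)\<^sup>2 - (Re (ip x y))\<^sup>2 / (norm y)\<^sup>2"
    unfolding norm_diff_scaleR_square t_def using ny by (simp add: field_simps power2_eq_square)
  finally have "(Re (ip x y))\<^sup>2 \<le> (norm x * norm y)\<^sup>2"
    using ny by (simp add: field_simps power_mult_distrib)
  then have "\<bar>Re (ip x y)\<bar> \<le> \<bar>norm x * norm y\<bar>" by (simp only: abs_le_square_iff)
  then show ?thesis by simp
qed

lemma norm_ip_le: "cmod (ip x y) \<le> norm x * norm y"
proof (cases "ip x y = 0")
  case True then show ?thesis by simp
next
  case False
  define u where "u = cnj (ip x y) / of_real (cmod (ip x y))"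
  have cu: "cmod u = 1" using False by (simp add: u_def norm_divide)
  have w: "of_real ((cmod (ip x y))\<^sup>2) = ip x y * cnj (ip x y)" by (rule complex_norm_square)
  have "ip (sc u x) y = of_real (cmod (ip x y))"
    unfolding ip_sc_left u_def using False w
    by (simp add: field_simps power2_eq_square)
  then have "cmod (ip x y) = Re (ip (sc u x) y)" by simp
  also have "\<dots> \<le> norm (sc u x) * norm y" using abs_Re_ip_le by (meson abs_le_D1)
  finally show ?thesis by (simp add: norm_sc cu)
qed

lemma bounded_linear_ip_left: "bounded_linear (\<lambda>x. ip x y)"
  by (rule bounded_linear_intro[where K="norm y"])
     (auto simp: ip_add_left ip_scaleR_left scaleR_conv_of_real norm_ip_le mult.commute)

lemma bounded_linear_sc: "bounded_linear (sc a)"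
  by (rule bounded_linear_intro[where K="cmod a"])
     (auto simp: sc_add_right sc_scaleR norm_sc)

lemma ip_suminf_left: "summable X \<Longrightarrow> ip (suminf X) y = (\<Sum>n. ip (X n) y)"
  using bounded_linear.suminf[OF bounded_linear_ip_left] by blast

lemma sc_suminf: "summable X \<Longrightarrow> sc a (suminf X) = (\<Sum>n. sc a (X n))"
  using bounded_linear.suminf[OF bounded_linear_sc] by blast

lemma bounded_linear_sc_left: "bounded_linear (\<lambda>a. sc a x)"
  by (rule bounded_linear_intro[where K="norm x"])
     (auto simp: sc_add_left norm_sc scaleR_conv_of_real sc_mult sc_of_real)

end

section \<open>Eigenvectors of generators of bounded semigroups\<close>

context complex_hilbert_space
begin

lemma C0_semigroup_gen_zero:
  assumes "C0_semigroup sc T"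
  shows "0 \<in> gen_dom T" and "gen T 0 = 0"
proof -
  have lin: "bounded_linear (T t)" if "t \<ge> 0" for t
    using assms that unfolding C0_semigroup_def by auto
  have "\<forall>\<^sub>F h in at_right 0. (1 / h) *\<^sub>R (T h 0 - 0) = (0::'a)"
    using eventually_at_right_less[of "0::real"]
    by eventually_elim (simp add: linear_simps(3)[OF lin])
  then have "((\<lambda>h. (1 / h) *\<^sub>R (T h 0 - 0)) \<longlongrightarrow> (0::'a)) (at_right 0)"
    by (rule tendsto_eventually)
  then show "0 \<in> gen_dom T" and "gen T 0 = 0"
    unfolding gen_dom_def gen_def by (auto intro: tendsto_Lim)
qed

lemma orbit_defect_little_o:
  assumes "x \<in> gen_dom T" and "gen T x = sc z x"
  shows "((\<lambda>h. (1 / h) *\<^sub>R (T h x - sc (exp (z * of_real h)) x)) \<longlongrightarrow> 0) (at_right 0)"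
proof -
  obtain y where y: "((\<lambda>h. (1 / h) *\<^sub>R (T h x - x)) \<longlongrightarrow> y) (at_right 0)"
    using assms(1) unfolding gen_dom_def by blast
  then have "gen T x = y" unfolding gen_def by (intro tendsto_Lim) simp_all
  with y assms(2) have "((\<lambda>h. (1 / h) *\<^sub>R (T h x - x)) \<longlongrightarrow> sc z x) (at_right 0)" by simp
  then have "((\<lambda>h. (1 / h) *\<^sub>R (T h x - x) - sc ((exp (z * of_real h) - 1) / of_real h) x)
      \<longlongrightarrow> sc z x - sc z x) (at_right 0)"
    by (intro tendsto_diff bounded_linear.tendsto[OF bounded_linear_sc_left
        tendsto_exp_difference_quotient])
  moreover have "(1 / h) *\<^sub>R (T h x - x) - sc ((exp (z * of_real h) - 1) / of_real h) x
      = (1 / h) *\<^sub>R (T h x - sc (exp (z * of_real h)) x)" for h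
  proof -
    have "(1 / h) *\<^sub>R (sc (exp (z * of_real h)) x - x)
        = sc (of_real (1 / h) * (exp (z * of_real h) - 1)) x"
      by (simp only: sc_of_real sc_diff_left sc_1 sc_mult)
    also have "of_real (1 / h) * (exp (z * of_real h) - 1) = (exp (z * of_real h) - 1) / of_real h"
      by (simp add: divide_inverse mult.commute)
    finally show ?thesis by (simp add: algebra_simps)
  qed
  ultimately show ?thesis by simp
qed

lemma orbit_defect_iterate:
  fixes x :: 'a
  assumes C0: "C0_semigroup sc T" and M: "\<And>t y. t \<ge> 0 \<Longrightarrow> norm (T t y) \<le> M * norm y"
    and "0 \<le> M" and "0 \<le> Re z" and "h > 0"
  defines "r \<equiv> T h x - sc (exp (z * of_real h)) x"
  shows "norm (T (real k * h) x - sc (exp (z * of_real (real k * h))) x)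
           \<le> real k * exp (Re z * (real k * h)) * (M * norm r)"
proof (induction k)
  case 0 then show ?case using C0 by (simp add: C0_semigroup_def)
next
  case (Suc k)
  define E where "E = exp (z * of_real (real k * h))"
  define e where "e = exp (z * of_real h)"
  have kh: "real k * h \<ge> 0" using \<open>h > 0\<close> by simp
  have semi: "T (real k * h + h) = T (real k * h) \<circ> T h"
    and lin: "bounded_linear (T (real k * h))"
    and sc_comm: "\<And>c y. T (real k * h) (sc c y) = sc c (T (real k * h) y)"
    using C0 kh \<open>h > 0\<close> unfolding C0_semigroup_def by auto
  have "T (real (Suc k) * h) x = T (real k * h) (sc e x + r)"
    using semi unfolding r_def e_def by (simp add: algebra_simps)
  also have "\<dots> = sc e (T (real k * h) x) + T (real k * h) r"
    using linear_simps(1)[OF lin] sc_comm by simp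
  finally have A: "T (real (Suc k) * h) x = sc e (T (real k * h) x) + T (real k * h) r" .
  have B: "exp (z * of_real (real (Suc k) * h)) = e * E"
    unfolding e_def E_def by (simp add: exp_add[symmetric] algebra_simps)
  have "T (real (Suc k) * h) x - sc (exp (z * of_real (real (Suc k) * h))) x
      = sc e (T (real k * h) x - sc E x) + T (real k * h) r"
    unfolding A B by (simp add: sc_mult sc_diff_right)
  then have "norm (T (real (Suc k) * h) x - sc (exp (z * of_real (real (Suc k) * h))) x)
      \<le> cmod e * norm (T (real k * h) x - sc E x) + M * norm r"
    using M[OF kh, of r] norm_triangle_ineq[of "sc e (T (real k * h) x - sc E x)" "T (real k * h) r"]
    by (simp add: norm_sc)
  also have "\<dots> \<le> exp (Re z * h) * (real k * exp (Re z * (real k * h)) * (M * norm r)) + M * norm r"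
    using Suc.IH \<open>0 \<le> M\<close> unfolding E_def e_def by (intro add_mono mult_left_mono) simp_all
  also have "\<dots> = real k * exp (Re z * (real (Suc k) * h)) * (M * norm r) + 1 * (M * norm r)"
    by (simp add: exp_add[symmetric] algebra_simps)
  also have "\<dots> \<le> real k * exp (Re z * (real (Suc k) * h)) * (M * norm r)
                 + exp (Re z * (real (Suc k) * h)) * (M * norm r)"
    using \<open>0 \<le> M\<close> \<open>0 \<le> Re z\<close> \<open>h > 0\<close> by (intro add_left_mono mult_right_mono) simp_all
  finally show ?case by (simp add: algebra_simps)
qed

lemma generator_eigenvector_orbit:
  assumes C0: "C0_semigroup sc T" and M: "\<And>t y. t \<ge> 0 \<Longrightarrow> norm (T t y) \<le> M * norm y"
    and "0 \<le> M" and "0 \<le> Re z" and x: "x \<in> gen_dom T" "gen T x = sc z x" and "t > 0"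
  shows "T t x = sc (exp (z * of_real t)) x"
proof -
  \<comment> \<open>\<open>n\<close> steps of length \<open>t/n\<close> accumulate \<open>n\<close> defects of size \<open>o(t/n)\<close>\<close>
  define r where "r h = T h x - sc (exp (z * of_real h)) x" for h
  define K where "K = t * exp (Re z * t) * M"
  have "norm (T t x - sc (exp (z * of_real t)) x) \<le> K * norm ((1 / (t / real n)) *\<^sub>R r (t / real n))"
    if "n \<ge> 1" for n
  proof -
    have "t / real n > 0" and tn: "real n * (t / real n) = t" using \<open>t > 0\<close> that by simp_all
    from orbit_defect_iterate[OF C0 M \<open>0 \<le> M\<close> \<open>0 \<le> Re z\<close> this(1), where x=x and k=n]
    have "norm (T t x - sc (exp (z * of_real t)) x) \<le> real n * exp (Re z * t) * (M * norm (r (t / real n)))"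
      unfolding tn r_def .
    also have "\<dots> = K * norm ((1 / (t / real n)) *\<^sub>R r (t / real n))"
      unfolding K_def using \<open>t > 0\<close> that by (simp add: field_simps)
    finally show ?thesis .
  qed
  moreover have "((\<lambda>n. K * norm ((1 / (t / real n)) *\<^sub>R r (t / real n))) \<longlongrightarrow> K * norm (0::'a)) sequentially"
    unfolding r_def
    by (intro tendsto_intros filterlim_compose[OF orbit_defect_little_o[OF x]]
        filterlim_divide_real_at_right_0 \<open>t > 0\<close>)
  ultimately have "norm (T t x - sc (exp (z * of_real t)) x) \<le> K * norm (0::'a)"
    by (intro LIMSEQ_le_const) auto
  then show ?thesis by simp
qed

lemma bounded_semigroup_no_eigenvalue:
  assumes C0: "C0_semigroup sc T" and M: "\<And>t y. t \<ge> 0 \<Longrightarrow> norm (T t y) \<le> M * norm y"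
    and x: "x \<in> gen_dom T" "gen T x = sc z x" and "0 < Re z"
  shows "x = 0"
proof (rule ccontr)
  assume "x \<noteq> 0"
  have "T 0 = id" using C0 unfolding C0_semigroup_def by blast
  then have "1 \<le> M" using M[of 0 x] \<open>x \<noteq> 0\<close> by simp
  define t where "t = (ln (M + 1) + 1) / Re z"
  have "t > 0" and "Re z * t = ln (M + 1) + 1"
    using \<open>1 \<le> M\<close> \<open>0 < Re z\<close> by (simp_all add: t_def add_pos_pos)
  then have "exp (Re z * t) = (M + 1) * exp 1" using \<open>1 \<le> M\<close> by (simp add: exp_add)
  moreover have "(M + 1) * 1 < (M + 1) * exp 1" using \<open>1 \<le> M\<close> by (intro mult_strict_left_mono) auto
  ultimately have big: "exp (Re z * t) > M" by simp
  have "0 \<le> M" and "0 \<le> Re z" using \<open>1 \<le> M\<close> \<open>0 < Re z\<close> by linarith+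
  with C0 M x \<open>t > 0\<close> have "T t x = sc (exp (z * of_real t)) x"
    by (intro generator_eigenvector_orbit)
  then have "norm (T t x) = cmod (exp (z * of_real t)) * norm x" by (simp only: norm_sc)
  then have "exp (Re z * t) * norm x = norm (T t x)" by (simp add: mult.commute)
  also have "\<dots> \<le> M * norm x" using M[of t x] \<open>t > 0\<close> by simp
  finally have "exp (Re z * t) \<le> M" using \<open>x \<noteq> 0\<close> by simp
  then show False using big by simp
qed

lemma poly_stable_no_eigenvalue:
  assumes gen: "generates sc D G T" and ps: "poly_stable sc \<alpha> T"
    and "x \<in> D" and eig: "sc z x - G x = 0" and "0 \<le> Re z"
  shows "x = 0"
proof -
  have C0: "C0_semigroup sc T" and x: "x \<in> gen_dom T" "gen T x = sc z x"
    using gen \<open>x \<in> D\<close> eig unfolding generates_def by auto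
  obtain M where M: "\<And>t y. t \<ge> 0 \<Longrightarrow> norm (T t y) \<le> M * norm y"
    using ps unfolding poly_stable_def by blast
  show ?thesis
  proof (cases "Re z = 0")
    case True
    then have "z = \<i> * complex_of_real (Im z)" by (simp add: complex_eq_iff)
    then have "z \<in> resolvent_set sc (gen_dom T) (gen T)"
      using ps unfolding poly_stable_def by metis
    then have "\<exists>!y. y \<in> gen_dom T \<and> sc z y - gen T y = 0"
      unfolding resolvent_set_def by blast
    moreover have "x \<in> gen_dom T \<and> sc z x - gen T x = 0" using x by simp
    moreover have "0 \<in> gen_dom T \<and> sc z 0 - gen T 0 = 0" using C0_semigroup_gen_zero[OF C0] by simp
    ultimately show ?thesis by blast
  next
    case False
    with \<open>0 \<le> Re z\<close> have "0 < Re z" by simp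
    with C0 M x show ?thesis by (intro bounded_semigroup_no_eigenvalue)
  qed
qed

end

section \<open>Riesz-spectral operators\<close>

locale riesz_spectral = complex_hilbert_space +
  fixes lam :: "nat \<Rightarrow> complex" and phi psi :: "nat \<Rightarrow> 'a::banach"
  assumes riesz_spectral_data: "riesz_spectral_data sc ip lam phi psi"
begin

lemma inj_lam: "inj lam" and riesz_basis: "riesz_basis sc phi"
  and biorthogonal: "ip (phi n) (psi k) = (if n = k then 1 else 0)"
  using riesz_spectral_data unfolding riesz_spectral_data_def by blast+

definition riesz_constants :: "real \<Rightarrow> real \<Rightarrow> bool" where
  "riesz_constants m M \<longleftrightarrow> 0 < m \<and> 0 < M \<and>
     (\<forall>N c. m * (\<Sum>n<N. (cmod (c n))\<^sup>2) \<le> (norm (\<Sum>n<N. sc (c n) (phi n)))\<^sup>2 \<and>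
            (norm (\<Sum>n<N. sc (c n) (phi n)))\<^sup>2 \<le> M * (\<Sum>n<N. (cmod (c n))\<^sup>2))"

definition "riesz_lower = (SOME m. \<exists>M. riesz_constants m M)"
definition "riesz_upper = (SOME M. riesz_constants riesz_lower M)"

lemma riesz_constants: "riesz_constants riesz_lower riesz_upper"
proof -
  have "\<exists>m M. riesz_constants m M"
    using riesz_basis unfolding riesz_basis_def riesz_constants_def by blast
  then have "\<exists>M. riesz_constants riesz_lower M"
    unfolding riesz_lower_def by (rule someI_ex)
  then show ?thesis unfolding riesz_upper_def by (rule someI_ex)
qed

lemma riesz_lower_pos: "0 < riesz_lower" and riesz_upper_pos: "0 < riesz_upper"
  using riesz_constants unfolding riesz_constants_def by auto

lemma dense_combinations: "closure {(\<Sum>n<N. sc (c n) (phi n)) | N c. True} = UNIV"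
  using riesz_basis unfolding riesz_basis_def by blast

lemma riesz_bounds_finite:
  assumes "finite S"
  shows "riesz_lower * (\<Sum>n\<in>S. (cmod (c n))\<^sup>2) \<le> (norm (\<Sum>n\<in>S. sc (c n) (phi n)))\<^sup>2"
    and "(norm (\<Sum>n\<in>S. sc (c n) (phi n)))\<^sup>2 \<le> riesz_upper * (\<Sum>n\<in>S. (cmod (c n))\<^sup>2)"
proof -
  obtain N where N: "S \<subseteq> {..<N}"
    using assms by (meson finite_nat_iff_bounded subset_eq lessThan_iff)
  define c' where "c' n = (if n \<in> S then c n else 0)" for n
  have "(\<Sum>n<N. sc (c' n) (phi n)) = (\<Sum>n<N. if n \<in> S then sc (c n) (phi n) else 0)"
    by (rule sum.cong) (auto simp: c'_def)
  moreover have "(\<Sum>n<N. (cmod (c' n))\<^sup>2) = (\<Sum>n<N. if n \<in> S then (cmod (c n))\<^sup>2 else 0)"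
    by (rule sum.cong) (auto simp: c'_def)
  ultimately
  have "(\<Sum>n<N. sc (c' n) (phi n)) = (\<Sum>n\<in>S. sc (c n) (phi n))"
    and "(\<Sum>n<N. (cmod (c' n))\<^sup>2) = (\<Sum>n\<in>S. (cmod (c n))\<^sup>2)"
    using N by (simp_all add: sum.inter_restrict[symmetric] Int_absorb1)
  with riesz_constants[unfolded riesz_constants_def] show
    "riesz_lower * (\<Sum>n\<in>S. (cmod (c n))\<^sup>2) \<le> (norm (\<Sum>n\<in>S. sc (c n) (phi n)))\<^sup>2"
    "(norm (\<Sum>n\<in>S. sc (c n) (phi n)))\<^sup>2 \<le> riesz_upper * (\<Sum>n\<in>S. (cmod (c n))\<^sup>2)"
    by metis+
qed

lemma summable_riesz_series:
  assumes "summable (\<lambda>n. (cmod (c n))\<^sup>2)"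
  shows "summable (\<lambda>n. sc (c n) (phi n))"
  unfolding summable_Cauchy
proof (intro allI impI)
  fix e :: real assume e: "e > 0"
  obtain N where N: "\<forall>k\<ge>N. \<forall>l. norm (\<Sum>n\<in>{k..<l}. (cmod (c n))\<^sup>2) < e\<^sup>2 / riesz_upper"
    using assms e riesz_upper_pos unfolding summable_Cauchy by (meson divide_pos_pos zero_less_power)
  show "\<exists>N. \<forall>k\<ge>N. \<forall>l. norm (\<Sum>n\<in>{k..<l}. sc (c n) (phi n)) < e"
  proof (intro exI allI impI)
    fix k l assume "N \<le> k"
    then have "riesz_upper * (\<Sum>n\<in>{k..<l}. (cmod (c n))\<^sup>2) < e\<^sup>2"
      using N riesz_upper_pos by (simp add: sum_nonneg pos_less_divide_eq mult.commute)
    then have "(norm (\<Sum>n\<in>{k..<l}. sc (c n) (phi n)))\<^sup>2 < e\<^sup>2"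
      using riesz_bounds_finite(2)[OF finite_atLeastLessThan[of k l], of c] by linarith
    then show "norm (\<Sum>n\<in>{k..<l}. sc (c n) (phi n)) < e"
      by (rule power_less_imp_less_base) (use e in auto)
  qed
qed

lemma ip_riesz_series_psi:
  assumes "summable (\<lambda>n. (cmod (c n))\<^sup>2)"
  shows "ip (\<Sum>n. sc (c n) (phi n)) (psi k) = c k"
proof -
  have "(\<lambda>n. c n * (if n = k then 1 else 0)) = (\<lambda>n. if n = k then c n else 0)" by auto
  then show ?thesis
    using ip_suminf_left[OF summable_riesz_series[OF assms]] sums_unique[OF sums_single[of k c]]
    by (simp add: ip_sc_left biorthogonal)
qed

lemma ip_combination_psi:
  "finite S \<Longrightarrow> ip (\<Sum>n\<in>S. sc (c n) (phi n)) (psi k) = (if k \<in> S then c k else 0)"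
  by (simp add: ip_sum_left ip_sc_left biorthogonal if_distrib cong: if_cong)

lemma phi_nonzero: "phi n \<noteq> 0" using biorthogonal[of n n] by auto

lemma bessel_phi: "(\<Sum>n<N. (cmod (ip x (phi n)))\<^sup>2) \<le> riesz_upper * (norm x)\<^sup>2"
proof -
  define c where "c n = ip x (phi n)" for n
  define v where "v = (\<Sum>n<N. sc (c n) (phi n))"
  define S where "S = (\<Sum>n<N. (cmod (c n))\<^sup>2)"
  have S0: "S \<ge> 0" unfolding S_def by (simp add: sum_nonneg)
  have "complex_of_real S = (\<Sum>n<N. cnj (c n) * c n)"
    unfolding S_def of_real_sum
    by (rule sum.cong) (auto simp: complex_norm_square mult.commute simp del: of_real_power)
  also have "\<dots> = ip x v" unfolding v_def c_def by (simp add: ip_sum_right ip_sc_right)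
  finally have "S \<le> norm x * norm v" using norm_ip_le[of x v] by (metis norm_of_real abs_le_iff order.trans)
  also have "norm v \<le> sqrt (riesz_upper * S)" unfolding v_def S_def
    using riesz_bounds_finite(2)[of "{..<N}" c] by (simp add: real_le_rsqrt)
  finally have "S \<le> norm x * sqrt (riesz_upper * S)" by (simp add: mult_left_mono)
  then have "S\<^sup>2 \<le> (norm x * sqrt (riesz_upper * S))\<^sup>2" using S0 by (intro power_mono) auto
  also have "\<dots> = S * (riesz_upper * (norm x)\<^sup>2)"
    using S0 riesz_upper_pos by (simp add: power_mult_distrib)
  finally have "S * S \<le> S * (riesz_upper * (norm x)\<^sup>2)" by (simp add: power2_eq_square)
  then have "S \<le> riesz_upper * (norm x)\<^sup>2"
    using S0 riesz_upper_pos by (cases "S = 0") (auto intro: mult_left_le_imp_le)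
  then show ?thesis unfolding S_def c_def .
qed

lemma summable_ip_phi_square: "summable (\<lambda>n. (cmod (ip x (phi n)))\<^sup>2)"
  by (rule summableI_nonneg_bounded[where x="riesz_upper * (norm x)^2"]) (use bessel_phi in auto)

lemma bessel_psi_combination:
  assumes "finite S"
  shows "riesz_lower * (\<Sum>n<N. (cmod (ip (\<Sum>n\<in>S. sc (c n) (phi n)) (psi n)))\<^sup>2)
    \<le> (norm (\<Sum>n\<in>S. sc (c n) (phi n)))\<^sup>2"
proof -
  have "(\<Sum>n<N. (cmod (ip (\<Sum>n\<in>S. sc (c n) (phi n)) (psi n)))\<^sup>2)
        = (\<Sum>n<N. if n \<in> S then (cmod (c n))\<^sup>2 else 0)"
    by (rule sum.cong) (simp_all add: ip_combination_psi assms)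
  also have "\<dots> = (\<Sum>n\<in>{..<N} \<inter> S. (cmod (c n))\<^sup>2)"
    by (simp add: sum.inter_restrict)
  also have "\<dots> \<le> (\<Sum>n\<in>S. (cmod (c n))\<^sup>2)" using assms by (intro sum_mono2) auto
  finally show ?thesis
    using riesz_bounds_finite(1)[OF assms, of c] riesz_lower_pos
    by (meson mult_left_mono less_imp_le order_trans)
qed

lemma bessel_psi: "riesz_lower * (\<Sum>n<N. (cmod (ip x (psi n)))\<^sup>2) \<le> (norm x)\<^sup>2"
proof -
  let ?P = "{x. riesz_lower * (\<Sum>n<N. (cmod (ip x (psi n)))\<^sup>2) \<le> (norm x)\<^sup>2}"
  have "closed ?P"
    by (intro closed_Collect_le continuous_intros linear_continuous_on bounded_linear_ip_left)
  moreover have "{(\<Sum>n<N. sc (c n) (phi n)) | N c. True} \<subseteq> ?P"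
    using bessel_psi_combination by blast
  ultimately have "closure {(\<Sum>n<N. sc (c n) (phi n)) | N c. True} \<subseteq> ?P"
    by (intro closure_minimal)
  then show ?thesis using dense_combinations by blast
qed

lemma summable_ip_psi_square: "summable (\<lambda>n. (cmod (ip x (psi n)))\<^sup>2)"
proof (rule summableI_nonneg_bounded[where x="(norm x)^2 / riesz_lower"])
  fix N show "(\<Sum>n<N. (cmod (ip x (psi n)))\<^sup>2) \<le> (norm x)\<^sup>2 / riesz_lower"
    using bessel_psi[where N=N and x=x] riesz_lower_pos by (simp add: pos_le_divide_eq mult.commute)
qed simp

lemma norm_combination_le_dist:
  assumes w: "\<And>n. ip w (psi n) = 0" and u: "u = (\<Sum>n<L. sc (a n) (phi n))"
  shows "norm u \<le> sqrt (riesz_upper / riesz_lower) * norm (u - w)"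
proof -
  have "(norm u)\<^sup>2 \<le> riesz_upper * (\<Sum>n<L. (cmod (a n))\<^sup>2)"
    unfolding u by (rule riesz_bounds_finite(2)) simp
  also have "(\<Sum>n<L. (cmod (a n))\<^sup>2) = (\<Sum>n<L. (cmod (ip (u - w) (psi n)))\<^sup>2)"
    unfolding u by (rule sum.cong) (simp_all add: ip_combination_psi ip_diff_left w)
  also have "\<dots> \<le> (norm (u - w))\<^sup>2 / riesz_lower"
    using bessel_psi[where N=L and x="u - w"] riesz_lower_pos by (simp add: pos_le_divide_eq mult.commute)
  finally have "(norm u)\<^sup>2 \<le> (sqrt (riesz_upper / riesz_lower) * norm (u - w))\<^sup>2"
    using riesz_upper_pos riesz_lower_pos by (simp add: power_mult_distrib mult_left_mono)
  then show ?thesis by (rule power2_le_imp_le) (use riesz_upper_pos riesz_lower_pos in simp)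
qed

lemma psi_complete:
  assumes w: "\<And>n. ip w (psi n) = 0"
  shows "w = 0"
proof -
  define K where "K = sqrt (riesz_upper / riesz_lower) + 1"
  have K: "K > 0" unfolding K_def using riesz_upper_pos riesz_lower_pos by (simp add: add_nonneg_pos)
  have approx: "norm w \<le> K * e" if e: "e > 0" for e
  proof -
    have "w \<in> closure {(\<Sum>n<N. sc (c n) (phi n)) | N c. True}" using dense_combinations by simp
    then obtain u where u: "u \<in> {(\<Sum>n<N. sc (c n) (phi n)) | N c. True}" and d: "dist u w < e"
      using e unfolding closure_approachable by blast
    from u obtain L a where "u = (\<Sum>n<L. sc (a n) (phi n))" by blast
    then have "norm u \<le> sqrt (riesz_upper / riesz_lower) * norm (u - w)"
      by (rule norm_combination_le_dist[OF w])
    also have "\<dots> \<le> sqrt (riesz_upper / riesz_lower) * e"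
      using d riesz_upper_pos riesz_lower_pos by (intro mult_left_mono) (simp_all add: dist_norm)
    finally have "norm u \<le> sqrt (riesz_upper / riesz_lower) * e" .
    moreover have "norm w \<le> norm u + norm (u - w)"
      by (metis norm_triangle_sub add.commute norm_minus_commute)
    ultimately show ?thesis using d unfolding K_def by (simp add: dist_norm distrib_right)
  qed
  show ?thesis
  proof (rule ccontr)
    assume "w \<noteq> 0"
    then have "norm w / (2 * K) > 0" using K by simp
    from approx[OF this] have "norm w \<le> norm w / 2" using K by simp
    then show False using \<open>w \<noteq> 0\<close> by simp
  qed
qed

lemma riesz_expansion: "x = (\<Sum>n. sc (ip x (psi n)) (phi n))"
proof -
  have "ip (x - (\<Sum>n. sc (ip x (psi n)) (phi n))) (psi k) = 0" for k
    by (simp add: ip_diff_left ip_riesz_series_psi[OF summable_ip_psi_square])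
  then show ?thesis using psi_complete by fastforce
qed

lemma ip_expansion: "ip x f = (\<Sum>n. ip x (psi n) * ip (phi n) f)"
proof -
  have "ip x f = (\<Sum>n. ip (sc (ip x (psi n)) (phi n)) f)"
    by (subst riesz_expansion)
       (rule ip_suminf_left[OF summable_riesz_series[OF summable_ip_psi_square]])
  then show ?thesis by (simp add: ip_sc_left)
qed

abbreviation "dom_A \<equiv> rs_dom ip lam psi"
abbreviation "op_A \<equiv> rs_op sc ip lam phi psi"

lemma ip_op_A_psi:
  assumes "x \<in> dom_A"
  shows "ip (op_A x) (psi k) = lam k * ip x (psi k)"
proof -
  have "summable (\<lambda>n. (cmod (lam n * ip x (psi n)))\<^sup>2)"
    using assms unfolding rs_dom_def by (simp add: norm_mult power_mult_distrib)
  then show ?thesis unfolding rs_op_def by (rule ip_riesz_series_psi)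
qed

lemma phi_in_dom_A: "phi n \<in> dom_A"
proof -
  have "(\<lambda>k. (cmod (lam k))\<^sup>2 * (cmod (ip (phi n) (psi k)))\<^sup>2)
        = (\<lambda>k. if k = n then (cmod (lam n))\<^sup>2 else 0)"
    by (auto simp: biorthogonal)
  then show ?thesis unfolding rs_dom_def using summable_single[of n "\<lambda>_. (cmod (lam n))\<^sup>2"] by simp
qed

lemma op_A_phi: "op_A (phi n) = sc (lam n) (phi n)"
proof -
  have "(\<lambda>k. sc (lam k * ip (phi n) (psi k)) (phi k)) = (\<lambda>k. if k = n then sc (lam n) (phi n) else 0)"
    by (auto simp: biorthogonal)
  then show ?thesis
    unfolding rs_op_def using sums_unique[OF sums_single[of n "\<lambda>_. sc (lam n) (phi n)"]] by metis
qed

lemma resolvent_set_dist_eigenvalues: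
  assumes "z \<in> resolvent_set sc dom_A op_A"
  obtains \<delta> where "\<delta> > 0" "\<And>n. \<delta> \<le> cmod (z - lam n)"
proof -
  obtain C where C: "\<forall>x\<in>dom_A. norm x \<le> C * norm (sc z x - op_A x)"
    using assms unfolding resolvent_set_def by blast
  have C_dist: "1 \<le> C * cmod (z - lam n)" for n
  proof -
    have "norm (phi n) \<le> C * norm (sc (z - lam n) (phi n))"
      using C phi_in_dom_A op_A_phi by (metis sc_diff_left)
    then show ?thesis using phi_nonzero[of n] by (simp add: norm_sc)
  qed
  have "C > 0"
  proof (rule ccontr)
    assume "\<not> 0 < C"
    then have "C * cmod (z - lam 0) \<le> 0" by (intro mult_nonpos_nonneg) auto
    with C_dist[of 0] show False by simp
  qed
  with C_dist show ?thesis
    by (intro that[of "1/C"]) (simp_all add: divide_le_eq mult.commute)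
qed

lemma resolvent_solves:
  assumes "z \<in> resolvent_set sc dom_A op_A"
  shows "resolvent sc dom_A op_A z y \<in> dom_A"
    and "sc z (resolvent sc dom_A op_A z y) - op_A (resolvent sc dom_A op_A z y) = y"
proof -
  have "\<exists>!x. x \<in> dom_A \<and> sc z x - op_A x = y" using assms unfolding resolvent_set_def by blast
  then have "resolvent sc dom_A op_A z y \<in> dom_A \<and>
      sc z (resolvent sc dom_A op_A z y) - op_A (resolvent sc dom_A op_A z y) = y"
    unfolding resolvent_def by (rule theI')
  then show "resolvent sc dom_A op_A z y \<in> dom_A"
    and "sc z (resolvent sc dom_A op_A z y) - op_A (resolvent sc dom_A op_A z y) = y" by auto
qed

lemma ip_resolvent_eq_series:
  assumes z: "z \<in> resolvent_set sc dom_A op_A"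
  shows "ip (resolvent sc dom_A op_A z b) f = (\<Sum>n. ip b (psi n) / (z - lam n) * ip (phi n) f)"
proof -
  define x where "x = resolvent sc dom_A op_A z b"
  obtain \<delta> where "\<delta> > 0" "\<And>n. \<delta> \<le> cmod (z - lam n)"
    using resolvent_set_dist_eigenvalues[OF z] by blast
  then have "z - lam n \<noteq> 0" for n by (metis norm_zero not_le)
  moreover have "ip b (psi n) = (z - lam n) * ip x (psi n)" for n
    using resolvent_solves[OF z, of b] unfolding x_def[symmetric]
    by (metis ip_diff_left ip_sc_left ip_op_A_psi left_diff_distrib)
  ultimately have "ip x (psi n) = ip b (psi n) / (z - lam n)" for n
    by (simp add: field_simps)
  then show ?thesis unfolding x_def[symmetric] ip_expansion[of x f] by simp
qed

lemma solve_shifted_equation: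
  assumes b_perp: "\<And>n. lam n = z \<Longrightarrow> ip b (psi n) = 0"
    and gap: "\<delta> > 0" "\<And>n. lam n \<noteq> z \<Longrightarrow> \<delta> \<le> cmod (z - lam n)"
  defines "c \<equiv> \<lambda>n. if lam n = z then 0 else ip b (psi n) / (z - lam n)"
  defines "x \<equiv> (\<Sum>n. sc (c n) (phi n))"
  shows "x \<in> dom_A" "sc z x - op_A x = b" "ip x f = (\<Sum>n. c n * ip (phi n) f)"
proof -
  have c_le: "cmod (c n) \<le> (1/\<delta>) * cmod (ip b (psi n))" for n
    using gap by (cases "lam n = z")
      (auto simp: c_def norm_divide divide_le_eq field_simps intro: mult_right_mono)
  have lam_c_le: "cmod (lam n * c n) \<le> (cmod z / \<delta> + 1) * cmod (ip b (psi n))" for n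
  proof (cases "lam n = z")
    case False
    then have "cmod (lam n * c n) = (cmod (lam n) / cmod (z - lam n)) * cmod (ip b (psi n))"
      by (simp add: c_def norm_mult norm_divide)
    also have "\<dots> \<le> (cmod z / \<delta> + 1) * cmod (ip b (psi n))"
      using False gap by (intro mult_right_mono norm_div_dist_le) auto
    finally show ?thesis .
  qed (use gap in \<open>simp add: c_def\<close>)
  have c_sq: "summable (\<lambda>n. (cmod (c n))\<^sup>2)"
    by (rule summable_square_norm_le[OF summable_ip_psi_square c_le])
  have lam_c_sq: "summable (\<lambda>n. (cmod (lam n * c n))\<^sup>2)"
    by (rule summable_square_norm_le[OF summable_ip_psi_square lam_c_le])
  have coeff: "ip x (psi n) = c n" for n unfolding x_def by (rule ip_riesz_series_psi[OF c_sq])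
  show "x \<in> dom_A" unfolding rs_dom_def using lam_c_sq by (simp add: coeff norm_mult power_mult_distrib)
  have s1: "summable (\<lambda>n. sc (c n) (phi n))" by (rule summable_riesz_series[OF c_sq])
  have s2: "summable (\<lambda>n. sc (lam n * c n) (phi n))" by (rule summable_riesz_series[OF lam_c_sq])
  have "sc z x - op_A x = (\<Sum>n. sc z (sc (c n) (phi n))) - (\<Sum>n. sc (lam n * c n) (phi n))"
    unfolding rs_op_def coeff unfolding x_def sc_suminf[OF s1] ..
  also have "\<dots> = (\<Sum>n. sc z (sc (c n) (phi n)) - sc (lam n * c n) (phi n))"
    by (rule suminf_diff[OF bounded_linear.summable[OF bounded_linear_sc s1] s2])
  also have "\<dots> = (\<Sum>n. sc (ip b (psi n)) (phi n))"
  proof (rule suminf_cong)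
    fix n
    have "(z - lam n) * c n = ip b (psi n)"
      using b_perp[of n] by (cases "lam n = z") (auto simp: c_def)
    then show "sc z (sc (c n) (phi n)) - sc (lam n * c n) (phi n) = sc (ip b (psi n)) (phi n)"
      by (metis sc_mult sc_diff_left left_diff_distrib)
  qed
  also have "\<dots> = b" using riesz_expansion[of b] by simp
  finally show "sc z x - op_A x = b" .
  show "ip x f = (\<Sum>n. c n * ip (phi n) f)" unfolding ip_expansion[of x f] coeff ..
qed

end

section \<open>The transfer function of a rank-one feedback\<close>

lemma powr_le_one_plus_powr_mult:
  fixes x \<alpha> \<beta> \<gamma> :: real
  assumes "0 \<le> x" "0 < \<alpha>" "\<alpha> \<le> \<beta> + \<gamma>"
  shows "x powr \<alpha> \<le> 1 + x powr \<beta> * x powr \<gamma>"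
proof (cases "x \<ge> 1")
  case True
  then have "x powr \<alpha> \<le> x powr (\<beta> + \<gamma>)" using assms by (intro powr_mono) auto
  then show ?thesis by (simp add: powr_add add_increasing)
next
  case False
  then have "x powr \<alpha> \<le> 1 powr \<alpha>" using assms by (intro powr_mono2) auto
  then show ?thesis by (simp add: add_increasing2)
qed

lemma mult_one_plus_powr_le_squares:
  fixes p q x \<alpha> \<beta> \<gamma> :: real
  assumes "0 \<le> p" "0 \<le> q" "0 \<le> x" "0 < \<alpha>" "\<alpha> \<le> \<beta> + \<gamma>"
  shows "p * q * (1 + x powr \<alpha>) \<le> p\<^sup>2 + q\<^sup>2 + x powr (2 * \<beta>) * p\<^sup>2 + x powr (2 * \<gamma>) * q\<^sup>2"
proof -
  have sq: "(x powr \<delta>)\<^sup>2 = x powr (2 * \<delta>)" for \<delta>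
    by (simp add: power2_eq_square powr_add[symmetric])
  have "p * q * (1 + x powr \<alpha>) \<le> p * q * (2 + x powr \<beta> * x powr \<gamma>)"
    using powr_le_one_plus_powr_mult[OF assms(3-5)] assms(1,2) by (intro mult_left_mono) simp_all
  also have "\<dots> = 2 * (p * q) + (x powr \<beta> * p) * (x powr \<gamma> * q)" by (simp add: algebra_simps)
  also have "\<dots> \<le> (p\<^sup>2 + q\<^sup>2) + ((x powr \<beta> * p)\<^sup>2 + (x powr \<gamma> * q)\<^sup>2)"
  proof -
    have "0 \<le> (x powr \<beta> * p) * (x powr \<gamma> * q)" using assms(1,2) by simp
    then show ?thesis
      using sum_squares_bound[of p q] sum_squares_bound[of "x powr \<beta> * p" "x powr \<gamma> * q"]
      by simp
  qed
  finally show ?thesis by (simp add: power_mult_distrib sq)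
qed

locale rank_one_feedback = riesz_spectral +
  fixes b f :: 'a and \<alpha> \<omega> \<Upsilon> \<beta> \<gamma> :: real
  assumes alpha_pos: "0 < \<alpha>" and omega_pos: "0 < \<omega>" and Upsilon_pos: "0 < \<Upsilon>"
    and finite_exceptional: "finite {n. - \<omega> < Re (lam n) \<and> lam n \<notin> Omega \<alpha> \<Upsilon>}"
    and b_smooth: "b \<in> Dpow ip lam psi \<beta>" and f_smooth: "f \<in> Dpow ip lam phi \<gamma>"
    and alpha_le: "\<alpha> \<le> \<beta> + \<gamma>"
    and no_eigenvalue:
      "\<And>z x. 0 \<le> Re z \<Longrightarrow> x \<in> dom_A \<Longrightarrow> sc z x - (op_A x + sc (ip x f) b) = 0 \<Longrightarrow> x = 0"
begin

definition "exceptional = {n. - \<omega> < Re (lam n) \<and> lam n \<notin> Omega \<alpha> \<Upsilon>}"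
definition "b_coeff n = ip b (psi n)"
definition "f_coeff n = ip (phi n) f"
definition "weight n = cmod (b_coeff n) * cmod (f_coeff n) * (1 + cmod (lam n) powr \<alpha>)"

lemma exceptional_finite: "finite exceptional"
  using finite_exceptional unfolding exceptional_def .

lemma weight_nonneg: "0 \<le> weight n"
  unfolding weight_def by simp

lemma coeff_product_le_weight: "cmod (b_coeff n) * cmod (f_coeff n) \<le> weight n"
proof -
  have "cmod (b_coeff n) * cmod (f_coeff n) * 1 \<le> weight n"
    unfolding weight_def by (intro mult_left_mono) simp_all
  then show ?thesis by simp
qed

lemma summable_weight: "summable weight"
proof -
  have f_coeff: "cmod (f_coeff n) = cmod (ip f (phi n))" for n
    unfolding f_coeff_def by (metis complex_mod_cnj ip_commute)
  have S: "summable (\<lambda>n. (cmod (b_coeff n))\<^sup>2 + (cmod (f_coeff n))\<^sup>2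
        + cmod (lam n) powr (2 * \<beta>) * (cmod (b_coeff n))\<^sup>2
        + cmod (lam n) powr (2 * \<gamma>) * (cmod (f_coeff n))\<^sup>2)"
    using b_smooth f_smooth unfolding Dpow_def b_coeff_def f_coeff
    by (intro summable_add summable_ip_psi_square summable_ip_phi_square) simp_all
  have "norm (weight n) \<le> (cmod (b_coeff n))\<^sup>2 + (cmod (f_coeff n))\<^sup>2
        + cmod (lam n) powr (2 * \<beta>) * (cmod (b_coeff n))\<^sup>2
        + cmod (lam n) powr (2 * \<gamma>) * (cmod (f_coeff n))\<^sup>2" for n
    unfolding weight_def using alpha_pos alpha_le
    by (simp add: mult_one_plus_powr_le_squares)
  then show ?thesis by (intro summable_comparison_test[OF _ S]) blast
qed

lemma inverse_dist_eigenvalue_le: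
  assumes z: "0 \<le> Re z" and n: "n \<notin> exceptional"
  shows "z \<noteq> lam n" "1 / cmod (z - lam n) \<le> 1 / \<omega> + cmod (lam n) powr \<alpha> / \<Upsilon>"
proof -
  have "Re (lam n) \<le> - \<omega> \<or> lam n \<in> Omega \<alpha> \<Upsilon>" using n unfolding exceptional_def by auto
  then have "z \<noteq> lam n \<and> 1 / cmod (z - lam n) \<le> 1 / \<omega> + cmod (lam n) powr \<alpha> / \<Upsilon>"
  proof
    assume "Re (lam n) \<le> - \<omega>"
    then have "\<omega> \<le> cmod (z - lam n)"
      using z complex_Re_le_cmod[of "z - lam n"] by simp
    moreover have "0 < cmod (z - lam n) * \<omega>"
      using \<open>\<omega> \<le> cmod (z - lam n)\<close> omega_pos by (intro mult_pos_pos) linarith+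
    ultimately have "1 / cmod (z - lam n) \<le> 1 / \<omega>" by (intro divide_left_mono) auto
    then show ?thesis using \<open>\<omega> \<le> cmod (z - lam n)\<close> omega_pos Upsilon_pos
      by (auto intro: add_increasing2)
  next
    assume "lam n \<in> Omega \<alpha> \<Upsilon>"
    then have I: "Im (lam n) \<noteq> 0" and R: "Re (lam n) \<le> - \<Upsilon> / (\<bar>Im (lam n)\<bar> powr \<alpha>)"
      unfolding Omega_def by auto
    have pos: "0 < \<Upsilon> / (\<bar>Im (lam n)\<bar> powr \<alpha>)" using Upsilon_pos I by simp
    have le: "\<Upsilon> / (\<bar>Im (lam n)\<bar> powr \<alpha>) \<le> cmod (z - lam n)"
      using R z complex_Re_le_cmod[of "z - lam n"] by simp
    moreover have "0 < cmod (z - lam n) * (\<Upsilon> / (\<bar>Im (lam n)\<bar> powr \<alpha>))"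
      using le pos by (intro mult_pos_pos) linarith+
    ultimately have "1 / cmod (z - lam n) \<le> 1 / (\<Upsilon> / (\<bar>Im (lam n)\<bar> powr \<alpha>))"
      by (intro divide_left_mono) auto
    also have "\<dots> = \<bar>Im (lam n)\<bar> powr \<alpha> / \<Upsilon>" by simp
    also have "\<dots> \<le> cmod (lam n) powr \<alpha> / \<Upsilon>"
      using Upsilon_pos alpha_pos abs_Im_le_cmod[of "lam n"] by (intro divide_right_mono powr_mono2) auto
    finally show ?thesis using pos le omega_pos
      by (auto intro: add_increasing)
  qed
  then show "z \<noteq> lam n" "1 / cmod (z - lam n) \<le> 1 / \<omega> + cmod (lam n) powr \<alpha> / \<Upsilon>" by auto
qed

lemma eigenvalues_isolated:
  assumes z: "0 \<le> Re z"
  obtains r where "r > 0" "\<And>n. lam n \<noteq> z \<Longrightarrow> r \<le> cmod (z - lam n)"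
proof -
  define B where "B = 1 / \<omega> + (cmod z + 1) powr \<alpha> / \<Upsilon>"
  have B_pos: "B > 0" unfolding B_def using omega_pos Upsilon_pos by (simp add: add_pos_nonneg)
  define F where "F = (\<lambda>n. cmod (z - lam n)) ` {n \<in> exceptional. lam n \<noteq> z}"
  have "finite F" unfolding F_def using exceptional_finite by simp
  define r where "r = Min (insert (min 1 (1 / B)) F)"
  have "r > 0" unfolding r_def using \<open>finite F\<close> B_pos by (auto simp: F_def)
  moreover have "r \<le> cmod (z - lam n)" if ne: "lam n \<noteq> z" for n
  proof (cases "n \<in> exceptional")
    case True
    then have "cmod (z - lam n) \<in> F" unfolding F_def using ne by auto
    then show ?thesis unfolding r_def using \<open>finite F\<close> by simp
  next
    case False
    have r_le: "r \<le> min 1 (1 / B)" unfolding r_def using \<open>finite F\<close> by (intro Min_le) simp_all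
    show ?thesis
    proof (cases "cmod (z - lam n) < 1")
      case True
      have "cmod (lam n) \<le> cmod z + cmod (z - lam n)"
        by (metis norm_minus_commute norm_triangle_sub add.commute)
      then have "cmod (lam n) \<le> cmod z + 1" using True by simp
      then have "1 / \<omega> + cmod (lam n) powr \<alpha> / \<Upsilon> \<le> B"
        unfolding B_def using alpha_pos Upsilon_pos
        by (intro add_left_mono divide_right_mono powr_mono2) auto
      with inverse_dist_eigenvalue_le(2)[OF z False] have "1 / cmod (z - lam n) \<le> B" by linarith
      then have "1 / B \<le> cmod (z - lam n)" using ne B_pos by (simp add: field_simps)
      then show ?thesis using r_le by simp
    qed (use r_le in simp)
  qed
  ultimately show ?thesis using that by blast
qed

definition "transfer_term n z = b_coeff n / (z - lam n) * f_coeff n"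
definition "transfer z = (\<Sum>n. transfer_term n z)"

text \<open>The part of the transfer function that stays holomorphic near the point \<open>l\<close>.\<close>

definition "transfer_regular l z = (\<Sum>n. if lam n = l then 0 else transfer_term n z)"

lemma norm_transfer_term:
  "cmod (transfer_term n z) = cmod (b_coeff n) * cmod (f_coeff n) / cmod (z - lam n)"
  unfolding transfer_term_def by (simp add: norm_mult norm_divide)

lemma norm_transfer_term_le:
  assumes "0 < D" "D \<le> cmod (z - lam n)"
  shows "cmod (transfer_term n z) \<le> cmod (b_coeff n) * cmod (f_coeff n) / D"
proof -
  have "0 < cmod (z - lam n) * D" using assms by (intro mult_pos_pos) linarith+
  with assms show ?thesis unfolding norm_transfer_term by (intro divide_left_mono) auto
qed

lemma ip_resolvent_eq_transfer:
  "z \<in> resolvent_set sc dom_A op_A \<Longrightarrow> ip (resolvent sc dom_A op_A z b) f = transfer z"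
  unfolding transfer_def transfer_term_def b_coeff_def f_coeff_def by (rule ip_resolvent_eq_series)

lemma transfer_term_le_weight:
  obtains K where "\<And>z n. 0 \<le> Re z \<Longrightarrow> n \<notin> exceptional \<or> cmod (lam n) + 1 \<le> cmod z \<Longrightarrow>
    cmod (transfer_term n z) \<le> K * weight n"
proof
  define K where "K = 1 / \<omega> + 1 / \<Upsilon> + 1"
  fix z n assume z: "0 \<le> Re z" and n: "n \<notin> exceptional \<or> cmod (lam n) + 1 \<le> cmod z"
  have "1 / cmod (z - lam n) \<le> K * (1 + cmod (lam n) powr \<alpha>)"
  proof (cases "n \<in> exceptional")
    case False
    have "1 / cmod (z - lam n) \<le> 1 / \<omega> + cmod (lam n) powr \<alpha> / \<Upsilon>"
      using inverse_dist_eigenvalue_le(2)[OF z False] .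
    also have "\<dots> \<le> K * (1 + cmod (lam n) powr \<alpha>)"
      unfolding K_def using omega_pos Upsilon_pos
      by (simp add: algebra_simps add_increasing add_nonneg_nonneg)
    finally show ?thesis .
  next
    case True
    then have "cmod (lam n) + 1 \<le> cmod z" using n by blast
    then have "1 \<le> cmod (z - lam n)" using norm_triangle_sub[of z "lam n"] by linarith
    then have "1 / cmod (z - lam n) \<le> 1" by (simp add: divide_le_eq_1)
    moreover have "1 * 1 \<le> K * (1 + cmod (lam n) powr \<alpha>)"
      unfolding K_def using omega_pos Upsilon_pos by (intro mult_mono) simp_all
    ultimately show ?thesis by simp
  qed
  then have "cmod (b_coeff n) * cmod (f_coeff n) * (1 / cmod (z - lam n))
      \<le> cmod (b_coeff n) * cmod (f_coeff n) * (K * (1 + cmod (lam n) powr \<alpha>))"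
    by (intro mult_left_mono) simp_all
  then show "cmod (transfer_term n z) \<le> K * weight n"
    unfolding norm_transfer_term weight_def by (simp add: ac_simps)
qed

lemma norm_transfer_head_le:
  assumes "0 < D" "\<And>n. n < N \<Longrightarrow> D \<le> cmod (z - lam n)"
  shows "cmod (\<Sum>n<N. transfer_term n z) \<le> (\<Sum>n<N. cmod (b_coeff n) * cmod (f_coeff n)) / D"
proof -
  have "cmod (\<Sum>n<N. transfer_term n z) \<le> (\<Sum>n<N. cmod (b_coeff n) * cmod (f_coeff n) / D)"
    using norm_transfer_term_le[OF assms(1)] assms(2) by (intro order.trans[OF norm_sum sum_mono]) simp
  then show ?thesis by (simp add: sum_divide_distrib)
qed

lemma norm_transfer_tail_le:
  assumes tail: "\<And>n. cmod (transfer_term (n + N) z) \<le> K * weight (n + N)"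
  shows "cmod (transfer z - (\<Sum>n<N. transfer_term n z)) \<le> (\<Sum>n. K * weight (n + N))"
proof -
  have "summable (\<lambda>n. K * weight (n + N))"
    using summable_mult[OF summable_weight, of K] by (subst summable_iff_shift)
  moreover from this have "summable (\<lambda>n. transfer_term (n + N) z)"
    by (rule summable_comparison_test'[where N=0]) (use tail in auto)
  then have "summable (\<lambda>n. transfer_term n z)"
    using summable_iff_shift[of "\<lambda>n. transfer_term n z" N] by simp
  then have "transfer z - (\<Sum>n<N. transfer_term n z) = (\<Sum>n. transfer_term (n + N) z)"
    unfolding transfer_def by (subst suminf_split_initial_segment[where k=N]) simp_all
  ultimately show ?thesis using norm_suminf_le[OF tail] by simp
qed

lemma transfer_small_at_infinity:
  obtains R where "\<And>z. 0 \<le> Re z \<Longrightarrow> R \<le> cmod z \<Longrightarrow> cmod (transfer z) \<le> 1/2"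
proof -
  obtain K where K: "\<And>z n. 0 \<le> Re z \<Longrightarrow> n \<notin> exceptional \<or> cmod (lam n) + 1 \<le> cmod z \<Longrightarrow>
      cmod (transfer_term n z) \<le> K * weight n"
    using transfer_term_le_weight by blast
  obtain N where N: "norm (\<Sum>i. K * weight (i + N)) < 1/4"
    using suminf_exist_split[OF _ summable_mult[OF summable_weight, of K], of "1/4"] by auto
  define S where "S = (\<Sum>n<N. cmod (b_coeff n) * cmod (f_coeff n))"
  have "S \<ge> 0" unfolding S_def by (simp add: sum_nonneg)
  define L where "L = (\<Sum>n<N. cmod (lam n)) + (\<Sum>n\<in>exceptional. cmod (lam n))"
  have lam_le: "cmod (lam n) \<le> L" if "n < N \<or> n \<in> exceptional" for n
    using that
  proof
    assume "n < N"
    then have "cmod (lam n) \<le> (\<Sum>n<N. cmod (lam n))" by (intro member_le_sum) auto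
    then show ?thesis unfolding L_def by (simp add: add_increasing2 sum_nonneg)
  next
    assume "n \<in> exceptional"
    then have "cmod (lam n) \<le> (\<Sum>n\<in>exceptional. cmod (lam n))"
      using exceptional_finite by (intro member_le_sum) auto
    then show ?thesis unfolding L_def by (simp add: add_increasing sum_nonneg)
  qed
  have "cmod (transfer z) \<le> 1/2" if z: "0 \<le> Re z" and zR: "L + 4 * S + 1 \<le> cmod z" for z
  proof -
    have "cmod (transfer z - (\<Sum>n<N. transfer_term n z)) \<le> (\<Sum>n. K * weight (n + N))"
    proof (rule norm_transfer_tail_le, rule K[OF z])
      show "n + N \<notin> exceptional \<or> cmod (lam (n + N)) + 1 \<le> cmod z" for n
        using lam_le[of "n + N"] zR \<open>S \<ge> 0\<close> by auto
    qed
    also have "\<dots> \<le> 1/4" using N by simp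
    finally have "cmod (transfer z - (\<Sum>n<N. transfer_term n z)) \<le> 1/4" .
    moreover have "4 * S + 1 \<le> cmod (z - lam n)" if "n < N" for n
      using lam_le that zR norm_triangle_ineq2[of z "lam n"] by fastforce
    with \<open>S \<ge> 0\<close> have "cmod (\<Sum>n<N. transfer_term n z) \<le> S / (4 * S + 1)"
      unfolding S_def by (intro norm_transfer_head_le) simp_all
    moreover have "S / (4 * S + 1) \<le> 1/4" using \<open>S \<ge> 0\<close> by (simp add: field_simps)
    moreover have "cmod (transfer z) \<le> cmod (transfer z - (\<Sum>n<N. transfer_term n z))
        + cmod (\<Sum>n<N. transfer_term n z)"
      using norm_triangle_ineq[of "transfer z - (\<Sum>n<N. transfer_term n z)" "\<Sum>n<N. transfer_term n z"]
      by simp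
    ultimately show ?thesis by linarith
  qed
  then show ?thesis by (rule that)
qed

lemma norm_regular_term_le:
  assumes gap: "r > 0" "\<And>n. lam n \<noteq> l \<Longrightarrow> r \<le> cmod (l - lam n)" and w: "w \<in> ball l (r/2)"
  shows "cmod (if lam n = l then 0 else transfer_term n w) \<le> (2 / r) * weight n"
proof (cases "lam n = l")
  case False
  have "r \<le> cmod (l - w) + cmod (w - lam n)"
    using gap(2)[OF False] norm_triangle_ineq[of "l - w" "w - lam n"] by simp
  then have "r / 2 \<le> cmod (w - lam n)" using w by (simp add: dist_norm)
  then have "cmod (transfer_term n w) \<le> cmod (b_coeff n) * cmod (f_coeff n) / (r / 2)"
    using gap(1) by (intro norm_transfer_term_le) simp_all
  also have "\<dots> \<le> weight n / (r / 2)"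
    using gap(1) by (intro divide_right_mono coeff_product_le_weight) simp
  finally show ?thesis using False by (simp add: ac_simps)
qed (use gap weight_nonneg in simp)

lemma summable_regular_terms:
  assumes gap: "r > 0" "\<And>n. lam n \<noteq> l \<Longrightarrow> r \<le> cmod (l - lam n)" and w: "w \<in> ball l (r/2)"
  shows "summable (\<lambda>n. if lam n = l then 0 else transfer_term n w)"
  by (rule summable_comparison_test'[OF summable_mult[OF summable_weight, of "2/r"]])
     (use norm_regular_term_le[OF gap w] in simp)

lemma continuous_on_transfer_regular:
  assumes gap: "r > 0" "\<And>n. lam n \<noteq> l \<Longrightarrow> r \<le> cmod (l - lam n)"
  shows "continuous_on (ball l (r/2)) (transfer_regular l)"
proof -
  have "uniform_limit (ball l (r/2)) (\<lambda>N w. \<Sum>n<N. if lam n = l then 0 else transfer_term n w)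
        (transfer_regular l) sequentially"
    unfolding transfer_regular_def[abs_def]
    by (rule Weierstrass_m_test[where M = "\<lambda>n. (2 / r) * weight n"])
       (use norm_regular_term_le[OF gap] in \<open>auto intro: summable_mult summable_weight\<close>)
  moreover have "continuous_on (ball l (r/2)) (\<lambda>w. if lam n = l then 0 else transfer_term n w)" for n
  proof (cases "lam n = l")
    case False
    have "w \<noteq> lam n" if "w \<in> ball l (r/2)" for w
      using gap(1) gap(2)[OF False] that by (auto simp: dist_norm norm_minus_commute)
    then show ?thesis using False unfolding transfer_term_def by (auto intro!: continuous_intros)
  qed simp
  moreover have "continuous_on (ball l (r/2)) (\<lambda>w. \<Sum>n<N. if lam n = l then 0 else transfer_term n w)"
    for N using calculation(2) by (intro continuous_on_sum) blast
  ultimately show ?thesis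
    by (intro uniform_limit_theorem[where F=sequentially]) (auto intro: always_eventually)
qed

lemma transfer_eq_regular:
  assumes "\<And>n. lam n = l \<Longrightarrow> b_coeff n = 0"
  shows "transfer z = transfer_regular l z"
  unfolding transfer_def transfer_regular_def
  by (rule suminf_cong) (simp add: assms transfer_term_def)

lemma transfer_eq_regular_plus_pole:
  assumes gap: "r > 0" "\<And>n. lam n \<noteq> l \<Longrightarrow> r \<le> cmod (l - lam n)" and w: "w \<in> ball l (r/2)"
    and "lam j = l"
  shows "transfer w = transfer_regular l w + transfer_term j w"
proof -
  have "(\<lambda>n. if lam n = l then transfer_term n w else 0) = (\<lambda>n. if n = j then transfer_term n w else 0)"
    using \<open>lam j = l\<close> by (intro ext) (auto simp: inj_eq[OF inj_lam])
  then have pole: "(\<lambda>n. if lam n = l then transfer_term n w else 0) sums transfer_term j w"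
    using sums_single[of j "\<lambda>n. transfer_term n w"] by simp
  have "transfer w = (\<Sum>n. (if lam n = l then 0 else transfer_term n w)
                          + (if lam n = l then transfer_term n w else 0))"
    unfolding transfer_def by (rule suminf_cong) simp
  also have "\<dots> = transfer_regular l w + transfer_term j w"
    unfolding transfer_regular_def
    using suminf_add[OF summable_regular_terms[OF gap w] sums_summable[OF pole]] sums_unique[OF pole]
    by simp
  finally show ?thesis .
qed

lemma transfer_term_residue:
  assumes "z \<in> resolvent_set sc dom_A op_A" and "lam j = l"
  shows "transfer_term j z * (z - l) = b_coeff j * f_coeff j"
proof -
  obtain \<delta> where "\<delta> > 0" "\<delta> \<le> cmod (z - lam j)"
    using resolvent_set_dist_eigenvalues[OF assms(1)] by metis
  then have "z - l \<noteq> 0" using \<open>lam j = l\<close> by auto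
  then show ?thesis unfolding transfer_term_def using \<open>lam j = l\<close> by (simp add: field_simps)
qed

lemma f_coeff_nonzero:
  assumes "0 \<le> Re (lam j)"
  shows "f_coeff j \<noteq> 0"
proof
  assume "f_coeff j = 0"
  then have "sc (lam j) (phi j) - (op_A (phi j) + sc (ip (phi j) f) b) = 0"
    by (simp add: op_A_phi f_coeff_def)
  then show False using no_eigenvalue[OF assms phi_in_dom_A] phi_nonzero by blast
qed

text \<open>If \<open>b\<close> has no component along the eigenvectors for \<open>l\<close>, a root of \<open>1 - F R(\<cdot>, A) B\<close>
  at \<open>l\<close> would yield an eigenvector of \<open>A + B F\<close> for \<open>l\<close>.\<close>

lemma transfer_regular_ne_one:
  assumes "0 \<le> Re l" and gap: "r > 0" "\<And>n. lam n \<noteq> l \<Longrightarrow> r \<le> cmod (l - lam n)"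
    and b_perp: "\<And>n. lam n = l \<Longrightarrow> b_coeff n = 0"
  shows "transfer_regular l l \<noteq> 1"
proof
  assume one: "transfer_regular l l = 1"
  define c where "c n = (if lam n = l then 0 else ip b (psi n) / (l - lam n))" for n
  define x where "x = (\<Sum>n. sc (c n) (phi n))"
  have "x \<in> dom_A" and eq: "sc l x - op_A x = b" and "ip x f = (\<Sum>n. c n * ip (phi n) f)"
    using solve_shifted_equation[OF _ gap] b_perp unfolding x_def c_def b_coeff_def by auto
  moreover have "(\<Sum>n. c n * ip (phi n) f) = transfer_regular l l"
    unfolding transfer_regular_def
    by (rule suminf_cong) (simp add: c_def transfer_term_def b_coeff_def f_coeff_def)
  ultimately have "ip x f = 1" using one by simp
  with eq have "sc l x - (op_A x + sc (ip x f) b) = 0" by (simp add: algebra_simps)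
  then have "x = 0" by (rule no_eigenvalue[OF \<open>0 \<le> Re l\<close> \<open>x \<in> dom_A\<close>])
  with \<open>ip x f = 1\<close> show False by simp
qed

lemma transfer_not_tendsto_one:
  assumes res: "\<And>j. w j \<in> resolvent_set sc dom_A op_A" and re: "\<And>j. 0 \<le> Re (w j)"
    and lim: "w \<longlonglongrightarrow> l"
  shows "\<not> (\<lambda>j. transfer (w j)) \<longlonglongrightarrow> 1"
proof
  assume one: "(\<lambda>j. transfer (w j)) \<longlonglongrightarrow> 1"
  have "0 \<le> Re l" by (rule LIMSEQ_le_const[OF tendsto_Re[OF lim]]) (use re in auto)
  then obtain r where gap: "r > 0" "\<And>n. lam n \<noteq> l \<Longrightarrow> r \<le> cmod (l - lam n)"
    using eigenvalues_isolated by blast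
  have "isCont (transfer_regular l) l"
    using continuous_on_transfer_regular[OF gap] gap(1)
    by (simp add: continuous_on_eq_continuous_at)
  then have regular: "(\<lambda>j. transfer_regular l (w j)) \<longlonglongrightarrow> transfer_regular l l"
    using isCont_tendsto_compose lim by blast
  have "\<forall>\<^sub>F j in sequentially. dist (w j) l < r/2"
    using lim gap(1) unfolding tendsto_iff by (meson half_gt_zero)
  then have near: "\<forall>\<^sub>F j in sequentially. w j \<in> ball l (r/2)"
    by eventually_elim (simp add: dist_commute)
  show False
  proof (cases "\<forall>n. lam n = l \<longrightarrow> b_coeff n = 0")
    case True
    then have "(\<lambda>j. transfer (w j)) \<longlonglongrightarrow> transfer_regular l l"
      using regular transfer_eq_regular[of l] by simp
    with one have "transfer_regular l l = 1" using LIMSEQ_unique by blast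
    with transfer_regular_ne_one[OF \<open>0 \<le> Re l\<close> gap] True show False by blast
  next
    case False
    then obtain j where "lam j = l" and "b_coeff j \<noteq> 0" by blast
    have "b_coeff j * f_coeff j \<noteq> 0"
      using \<open>b_coeff j \<noteq> 0\<close> f_coeff_nonzero \<open>0 \<le> Re l\<close> \<open>lam j = l\<close> by simp
    have pole: "transfer_term j (w i) * (w i - l) = b_coeff j * f_coeff j" for i
      using transfer_term_residue[OF res \<open>lam j = l\<close>] .
    have "(\<lambda>i. (transfer (w i) - transfer_regular l (w i)) * (w i - l))
        \<longlonglongrightarrow> (1 - transfer_regular l l) * (l - l)"
      by (intro tendsto_intros one regular lim)
    moreover have "\<forall>\<^sub>F i in sequentially. (transfer (w i) - transfer_regular l (w i)) * (w i - l)
        = transfer_term j (w i) * (w i - l)"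
      using near by eventually_elim (simp add: transfer_eq_regular_plus_pole[OF gap _ \<open>lam j = l\<close>])
    ultimately have "(\<lambda>i. transfer_term j (w i) * (w i - l)) \<longlonglongrightarrow> 0"
      using Lim_transform_eventually by fastforce
    then have "(\<lambda>i. b_coeff j * f_coeff j) \<longlonglongrightarrow> 0" by (simp only: pole)
    then show False using \<open>b_coeff j * f_coeff j \<noteq> 0\<close> LIMSEQ_const_iff by blast
  qed
qed

lemma transfer_bounded_away_from_one:
  "\<exists>\<epsilon>>0. \<forall>z \<in> resolvent_set sc dom_A op_A. 0 \<le> Re z \<longrightarrow> \<epsilon> < cmod (1 - transfer z)"
proof (rule ccontr)
  assume "\<not> ?thesis"
  then have contra: "\<forall>\<epsilon>>0. \<exists>z \<in> resolvent_set sc dom_A op_A. 0 \<le> Re z \<and> cmod (1 - transfer z) \<le> \<epsilon>"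
    by (meson not_less)
  have "\<exists>z. z \<in> resolvent_set sc dom_A op_A \<and> 0 \<le> Re z \<and>
      cmod (1 - transfer z) \<le> 1 / (real k + 3)" for k :: nat
    using contra[rule_format, of "1 / (real k + 3)"] by auto
  then obtain zs where res: "\<And>k. zs k \<in> resolvent_set sc dom_A op_A"
    and re: "\<And>k. 0 \<le> Re (zs k)" and small: "\<And>k. cmod (1 - transfer (zs k)) \<le> 1 / (real k + 3)"
    by metis
  obtain R where R: "\<And>z. 0 \<le> Re z \<Longrightarrow> R \<le> cmod z \<Longrightarrow> cmod (transfer z) \<le> 1/2"
    using transfer_small_at_infinity by blast
  have "cmod (zs k) \<le> R" for k
  proof (rule ccontr)
    assume "\<not> cmod (zs k) \<le> R"
    then have "cmod (transfer (zs k)) \<le> 1/2" using R[OF re] by simp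
    then have "1/2 \<le> cmod (1 - transfer (zs k))"
      using norm_triangle_ineq2[of 1 "transfer (zs k)"] by simp
    moreover have "1 / (real k + 3) < 1/2" by (simp add: field_simps)
    ultimately show False using small[of k] by simp
  qed
  then have "bounded (range zs)" unfolding bounded_iff by blast
  then obtain l \<sigma> where "strict_mono \<sigma>" and lim: "(zs \<circ> \<sigma>) \<longlonglongrightarrow> l"
    using bounded_imp_convergent_subsequence by blast
  have zero: "(\<lambda>j. 1 / (real j + 3)) \<longlonglongrightarrow> 0"
    using LIMSEQ_ignore_initial_segment[OF lim_const_over_n[of "1::real"], of 3]
    by (simp add: add.commute)
  have bound: "norm (1 - transfer ((zs \<circ> \<sigma>) j)) \<le> 1 / (real j + 3)" for j
  proof -
    have "real j \<le> real (\<sigma> j)" using seq_suble[OF \<open>strict_mono \<sigma>\<close>] by simp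
    then have "1 / (real (\<sigma> j) + 3) \<le> 1 / (real j + 3)" by (simp add: frac_le)
    then show ?thesis using small[of "\<sigma> j"] by simp
  qed
  have "(\<lambda>j. 1 - transfer ((zs \<circ> \<sigma>) j)) \<longlonglongrightarrow> 0"
    by (rule Lim_null_comparison[OF always_eventually zero]) (use bound in blast)
  then have "(\<lambda>j. 1 - (1 - transfer ((zs \<circ> \<sigma>) j))) \<longlonglongrightarrow> 1 - 0"
    by (intro tendsto_diff tendsto_const)
  then have "(\<lambda>j. transfer ((zs \<circ> \<sigma>) j)) \<longlonglongrightarrow> 1" by simp
  moreover have "\<And>j. (zs \<circ> \<sigma>) j \<in> resolvent_set sc dom_A op_A" "\<And>j. 0 \<le> Re ((zs \<circ> \<sigma>) j)"
    using res re by simp_all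
  ultimately show False using transfer_not_tendsto_one lim by blast
qed

end

theorem mainTheorem8:
  fixes sc :: "complex \<Rightarrow> 'a::banach \<Rightarrow> 'a"
    and ip :: "'a \<Rightarrow> 'a \<Rightarrow> complex"
    and lam :: "nat \<Rightarrow> complex" and phi psi :: "nat \<Rightarrow> 'a"
    and b f :: 'a and \<alpha> :: real
  assumes H: "complex_hilbert sc ip"
    and RS: "riesz_spectral_data sc ip lam phi psi"
    and alpha_pos: "0 < \<alpha>"
    and A1: "\<exists>\<omega> \<Upsilon>. 0 < \<omega> \<and> 0 < \<Upsilon> \<and>
               finite {n. - \<omega> < Re (lam n) \<and> lam n \<notin> Omega \<alpha> \<Upsilon>}"
    and A3: "\<exists>T. generates sc (rs_dom ip lam psi)
                   (\<lambda>x. rs_op sc ip lam phi psi x + sc (ip x f) b) T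
               \<and> poly_stable sc \<alpha> T"
    and A4: "\<exists>\<beta> \<gamma>. 0 \<le> \<beta> \<and> 0 \<le> \<gamma> \<and> b \<in> Dpow ip lam psi \<beta> \<and> f \<in> Dpow ip lam phi \<gamma> \<and>
               ((\<beta> \<in> \<nat> \<and> \<gamma> \<in> \<nat> \<and> \<alpha> \<le> \<beta> + \<gamma>) \<or> \<alpha> < \<beta> + \<gamma>)"
  shows "\<exists>\<epsilon>>0. \<forall>z \<in> resolvent_set sc (rs_dom ip lam psi) (rs_op sc ip lam phi psi).
           0 \<le> Re z \<longrightarrow>
           \<epsilon> < cmod (1 - ip (resolvent sc (rs_dom ip lam psi) (rs_op sc ip lam phi psi) z b) f)"
proof -
  interpret complex_hilbert_space sc ip by (rule complex_hilbert_space.intro[OF H])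
  obtain \<omega> \<Upsilon> where "0 < \<omega>" "0 < \<Upsilon>" "finite {n. - \<omega> < Re (lam n) \<and> lam n \<notin> Omega \<alpha> \<Upsilon>}"
    using A1 by blast
  \<comment> \<open>both alternatives of (A4) are used only through \<open>\<alpha> \<le> \<beta> + \<gamma>\<close>\<close>
  moreover obtain \<beta> \<gamma> where "b \<in> Dpow ip lam psi \<beta>" "f \<in> Dpow ip lam phi \<gamma>" "\<alpha> \<le> \<beta> + \<gamma>"
    using A4 by auto
  moreover obtain T
    where "generates sc (rs_dom ip lam psi) (\<lambda>x. rs_op sc ip lam phi psi x + sc (ip x f) b) T"
      and "poly_stable sc \<alpha> T"
    using A3 by blast
  ultimately interpret rank_one_feedback sc ip lam phi psi b f \<alpha> \<omega> \<Upsilon> \<beta> \<gamma>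
    using H RS alpha_pos poly_stable_no_eigenvalue by unfold_locales auto
  show ?thesis
    using transfer_bounded_away_from_one ip_resolvent_eq_transfer by simp
qed

end
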